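(* Let $\mu_1,\dots,\mu_k$ be i.i.d. $\sim\Gamma$, where $\Gamma$ is a $1$-regular distribution on $[0,1]$ with density $g$ and CDF $G(z)=\int_0^zg(x)\,dx$. Let $\mu_{(k)}\le\mu_{(k-1)}\le\dots\le\mu_{(1)}$ be the order statistics and $\Delta_{(i)}=\mu_{(1)}-\mu_{(i)}$. Then: (1) for $2\le i\le k$, $U_i=\Delta_{(i)}$ has density $$g_{U_i}(u)=k(k-1)\binom{k-2}{i-2}\int_0^{1-u}\bigl(G(u+z)-G(z)\bigr)^{i-2}g(u+z)g(z)G(z)^{k-i}\,dz;$$ (2) if $g(x)\le D_0$ for all $x\in[0,1]$, then for any $i\ge3$, $\mathbb{E}[1/\Delta_{(i)}]\le D_0k/(i-2)$.
   Context: $1$-regular: there exist $0<c_0<C_0$ with $c_0\epsilon\le\mathbb{P}_\Gamma(\mu>1-\epsilon)\le\mathbb{P}_\Gamma(\mu\ge1-\epsilon)\le C_0\epsilon$ for all $\epsilon\in(0,1]$. *)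

theory Defs
  imports "HOL-Probability.Probability"
begin

definition one_regular :: "real measure \<Rightarrow> bool" where
  "one_regular Gam \<longleftrightarrow> (\<exists>c0 C0::real. 0 < c0 \<and> c0 < C0 \<and>
     (\<forall>\<epsilon>\<in>{0<..1}. c0 * \<epsilon> \<le> measure Gam {1 - \<epsilon><..}
        \<and> measure Gam {1 - \<epsilon><..} \<le> measure Gam {1 - \<epsilon>..}
        \<and> measure Gam {1 - \<epsilon>..} \<le> C0 * \<epsilon>))"

definition order_stat_desc :: "nat \<Rightarrow> (nat \<Rightarrow> real) \<Rightarrow> nat \<Rightarrow> real" where
  "order_stat_desc k x i = rev (sort (map x [1..<Suc k])) ! (i - 1)"

definition gap_stat :: "nat \<Rightarrow> (nat \<Rightarrow> real) \<Rightarrow> nat \<Rightarrow> real" where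
  "gap_stat k x i = order_stat_desc k x 1 - order_stat_desc k x i"

end

theory Submission
  imports Defs
begin

(* Almost surely there are no ties, and then the sample determines a unique triple (a, b, S):
   the index a of the maximum, the index b of the i-th largest value and the set S of the
   i - 2 indices strictly in between.  Summing over all n (n - 1) C(n - 2, i - 2) triples and
   integrating out the other coordinates, every triple contributes the same integral of
   h (u - v) (G u - G v)^(i - 2) G v^(n - i) over v < u against Gamma x Gamma; the substitution
   u = v + w turns it into the stated density.  For the bound, G u - G v <= D0 (u - v) trades
   the factor 1 / (u - v) for one power of G u - G v, leaving D0 times the total mass of the
   gap density of order i - 1 among n - 1 samples, which is 1; the binomial identity
   (i - 2) C(n - 2, i - 2) = (n - 2) C(n - 3, i - 3) gives the constant. *)

section \<open>Descending order statistics\<close>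

lemma card_filter_eq_order_stat_desc:
  "card {j\<in>{1..n}. P (x j)} = card {m. m < n \<and> P (order_stat_desc n x (Suc m))}"
proof -
  let ?xs = "map x [1..<Suc n]"
  have "card {j\<in>{1..n}. P (x j)} = card ({j. P (x j)} \<inter> set [1..<Suc n])"
    by (rule arg_cong[where f = card]) auto
  also have "\<dots> = length (filter P ?xs)"
    by (simp add: distinct_length_filter filter_map comp_def)
  also have "\<dots> = length (filter P (rev (sort ?xs)))"
    by (simp add: rev_filter[symmetric] filter_sort)
  also have "\<dots> = card {m. m < n \<and> P (order_stat_desc n x (Suc m))}"
    by (simp add: length_filter_conv_card order_stat_desc_def)
  finally show ?thesis .
qed

lemma order_stat_desc_antimono:
  assumes "1 \<le> p" "p \<le> q" "q \<le> n"
  shows "order_stat_desc n x q \<le> order_stat_desc n x p"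
proof (cases "p = q")
  case False
  define ys where "ys = rev (sort (map x [1..<Suc n]))"
  have "sorted_wrt (\<ge>) ys" "length ys = n"
    by (simp_all add: ys_def sorted_wrt_rev)
  from sorted_wrt_nth_less[OF this(1), of "p - 1" "q - 1"] show ?thesis
    using assms False \<open>length ys = n\<close> by (simp add: order_stat_desc_def ys_def)
qed simp

lemma order_stat_desc_le_iff:
  assumes "1 \<le> i" "i \<le> n"
  shows "order_stat_desc n x i \<le> t \<longleftrightarrow> card {j\<in>{1..n}. t < x j} < i"
proof
  assume le: "order_stat_desc n x i \<le> t"
  have "{m. m < n \<and> t < order_stat_desc n x (Suc m)} \<subseteq> {..<i - 1}"
  proof (intro subsetI)
    fix m assume m: "m \<in> {m. m < n \<and> t < order_stat_desc n x (Suc m)}"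
    show "m \<in> {..<i - 1}"
    proof (rule ccontr)
      assume "m \<notin> {..<i - 1}"
      then have "order_stat_desc n x (Suc m) \<le> order_stat_desc n x i"
        using assms m by (intro order_stat_desc_antimono) auto
      then show False using m le by simp
    qed
  qed
  from card_mono[OF finite_lessThan this] show "card {j\<in>{1..n}. t < x j} < i"
    using assms card_filter_eq_order_stat_desc[where P = "\<lambda>y. t < y"] by simp
next
  assume card: "card {j\<in>{1..n}. t < x j} < i"
  show "order_stat_desc n x i \<le> t"
  proof (rule ccontr)
    assume gt: "\<not> order_stat_desc n x i \<le> t"
    have "{..<i} \<subseteq> {m. m < n \<and> t < order_stat_desc n x (Suc m)}"
    proof (intro subsetI CollectI conjI)
      fix m assume "m \<in> {..<i}"
      moreover have "order_stat_desc n x i \<le> order_stat_desc n x (Suc m)"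
        using \<open>m \<in> {..<i}\<close> assms by (intro order_stat_desc_antimono) auto
      ultimately show "m < n" "t < order_stat_desc n x (Suc m)"
        using assms gt by auto
    qed
    from card_mono[OF _ this] have "i \<le> card {m. m < n \<and> t < order_stat_desc n x (Suc m)}"
      by simp
    then show False
      using card card_filter_eq_order_stat_desc[where P = "\<lambda>y. t < y"] by simp
  qed
qed

lemma order_stat_desc_le_card:
  assumes "1 \<le> i" "i \<le> n"
  shows "i \<le> card {j\<in>{1..n}. order_stat_desc n x i \<le> x j}"
proof -
  have "{..<i} \<subseteq> {m. m < n \<and> order_stat_desc n x i \<le> order_stat_desc n x (Suc m)}"
    using assms by (auto intro: order_stat_desc_antimono)
  from card_mono[OF _ this] show ?thesis
    using card_filter_eq_order_stat_desc[where P = "\<lambda>y. order_stat_desc n x i \<le> y"] by simp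
qed

lemma order_stat_desc_mem:
  assumes "1 \<le> i" "i \<le> n"
  shows "\<exists>j\<in>{1..n}. order_stat_desc n x i = x j"
proof -
  have "rev (sort (map x [1..<Suc n])) ! (i - 1) \<in> set (rev (sort (map x [1..<Suc n])))"
    using assms by (intro nth_mem) simp
  then show ?thesis by (auto simp: order_stat_desc_def)
qed

lemma order_stat_desc_eqI:
  assumes "1 \<le> i" "i \<le> n"
    and "card {j\<in>{1..n}. t < x j} < i" "i \<le> card {j\<in>{1..n}. t \<le> x j}"
  shows "order_stat_desc n x i = t"
proof (rule antisym)
  show "order_stat_desc n x i \<le> t"
    using assms order_stat_desc_le_iff by blast
  show "t \<le> order_stat_desc n x i"
  proof (rule ccontr)
    assume "\<not> t \<le> order_stat_desc n x i"
    then have "{j\<in>{1..n}. t \<le> x j} \<subseteq> {j\<in>{1..n}. order_stat_desc n x i < x j}"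
      by auto
    from card_mono[OF _ this] have "i \<le> card {j\<in>{1..n}. order_stat_desc n x i < x j}"
      using assms(4) by simp
    then show False
      using order_stat_desc_le_iff[OF assms(1,2), of x "order_stat_desc n x i"] by simp
  qed
qed

lemma measurable_order_stat_desc:
  assumes "1 \<le> i" "i \<le> n" and [measurable_cong]: "sets M = sets borel"
  shows "(\<lambda>x. order_stat_desc n x i) \<in> borel_measurable (PiM {1..n} (\<lambda>_. M))"
proof (subst borel_measurable_iff_le, intro allI)
  fix t
  have "{x \<in> space (PiM {1..n} (\<lambda>_. M)). order_stat_desc n x i \<le> t} =
        {x \<in> space (PiM {1..n} (\<lambda>_. M)). (\<Sum>j\<in>{1..n}. if t < x j then 1 else 0) < real i}"
  proof (intro Collect_cong conj_cong refl)
    fix x :: "nat \<Rightarrow> real"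
    have "real (card {j\<in>{1..n}. t < x j}) = (\<Sum>j\<in>{1..n}. if t < x j then 1 else 0)"
      by (simp add: sum.inter_filter[symmetric])
    then show "order_stat_desc n x i \<le> t \<longleftrightarrow> (\<Sum>j\<in>{1..n}. if t < x j then 1 else 0) < real i"
      using order_stat_desc_le_iff[OF assms(1,2), of x t] by (metis of_nat_less_iff)
  qed
  also have "\<dots> \<in> sets (PiM {1..n} (\<lambda>_. M))"
    by measurable
  finally show "{x \<in> space (PiM {1..n} (\<lambda>_. M)). order_stat_desc n x i \<le> t} \<in> sets (PiM {1..n} (\<lambda>_. M))" .
qed

lemma measurable_gap_stat [measurable]:
  assumes "2 \<le> i" "i \<le> n" and [measurable_cong]: "sets M = sets borel"
  shows "(\<lambda>x. gap_stat n x i) \<in> borel_measurable (PiM {1..n} (\<lambda>_. M))"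
proof -
  have [measurable]: "(\<lambda>x. order_stat_desc n x i) \<in> borel_measurable (PiM {1..n} (\<lambda>_. M))"
    "(\<lambda>x. order_stat_desc n x 1) \<in> borel_measurable (PiM {1..n} (\<lambda>_. M))"
    using assms measurable_order_stat_desc[OF _ _ assms(3)] by auto
  show ?thesis
    unfolding gap_stat_def by measurable
qed

lemma gap_stat_cong: "(\<And>j. j \<in> {1..n} \<Longrightarrow> x j = y j) \<Longrightarrow> gap_stat n x i = gap_stat n y i"
  unfolding gap_stat_def order_stat_desc_def by (metis atLeastLessThanSuc_atLeastAtMost map_cong set_upt)

section \<open>Rank configurations\<close>

definition gap_config :: "nat set \<Rightarrow> (nat \<Rightarrow> real) \<Rightarrow> nat \<Rightarrow> nat \<Rightarrow> nat set \<Rightarrow> bool" where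
  "gap_config I x a b S \<longleftrightarrow>
     x b < x a \<and> (\<forall>j\<in>S. x b < x j \<and> x j \<le> x a) \<and> (\<forall>j\<in>I - {a, b} - S. x j \<le> x b)"

definition gap_configs :: "nat \<Rightarrow> nat \<Rightarrow> (nat \<times> nat \<times> nat set) set" where
  "gap_configs n i =
     (SIGMA a:{1..n}. SIGMA b:{1..n} - {a}. {S. S \<subseteq> {1..n} - {a, b} \<and> card S = i - 2})"

lemma finite_gap_configs: "finite (gap_configs n i)"
  unfolding gap_configs_def by (intro finite_SigmaI) auto

lemma card_gap_configs: "card (gap_configs n i) = n * (n - 1) * ((n - 2) choose (i - 2))"
proof -
  have "card {S. S \<subseteq> {1..n} - {a, b} \<and> card S = i - 2} = (n - 2) choose (i - 2)"
    if "a \<in> {1..n}" "b \<in> {1..n} - {a}" for a b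
    using that n_subsets[of "{1..n} - {a, b}" "i - 2"] by (simp add: card_Diff_subset numeral_2_eq_2)
  then show ?thesis
    unfolding gap_configs_def by simp
qed

lemma gap_config_order_stat_desc:
  assumes i: "2 \<le> i" "i \<le> n"
    and abS: "(a, b, S) \<in> gap_configs n i" and config: "gap_config {1..n} x a b S"
  shows "order_stat_desc n x 1 = x a" "order_stat_desc n x i = x b"
proof -
  have a: "a \<in> {1..n}" and b: "b \<in> {1..n}" "b \<noteq> a"
    and S: "S \<subseteq> {1..n} - {a, b}" "card S = i - 2"
    using abS by (auto simp: gap_configs_def)
  have ba: "x b < x a" and inS: "\<And>j. j \<in> S \<Longrightarrow> x b < x j \<and> x j \<le> x a"
    and outS: "\<And>j. j \<in> {1..n} - {a, b} - S \<Longrightarrow> x j \<le> x b"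
    using config unfolding gap_config_def by auto
  have "finite S"
    using S(1) by (rule finite_subset) simp
  have le_a: "x j \<le> x a" if "j \<in> {1..n}" for j
  proof (cases "j \<in> S \<or> j = a \<or> j = b")
    case True
    then show ?thesis using ba inS[of j] by auto
  next
    case False
    then show ?thesis using that ba outS[of j] by simp
  qed
  have above_b: "{j\<in>{1..n}. x b < x j} = insert a S"
  proof (intro equalityI subsetI)
    fix j assume "j \<in> {j\<in>{1..n}. x b < x j}"
    then show "j \<in> insert a S"
      using outS[of j] by (cases "j = a \<or> j = b") auto
  qed (use a ba inS S(1) in auto)
  have "a \<notin> S"
    using S(1) by auto
  then have "card {j\<in>{1..n}. x b < x j} = i - 1"
    using above_b S(2) \<open>finite S\<close> i by simp
  moreover have "card (insert b {j\<in>{1..n}. x b < x j}) \<le> card {j\<in>{1..n}. x b \<le> x j}"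
    using b by (intro card_mono) auto
  ultimately show "order_stat_desc n x i = x b"
    using i by (intro order_stat_desc_eqI) simp_all
  have "{j\<in>{1..n}. x a < x j} = {}"
    using le_a by (auto simp: not_less)
  moreover have "card {a} \<le> card {j\<in>{1..n}. x a \<le> x j}"
    using a by (intro card_mono) auto
  ultimately show "order_stat_desc n x 1 = x a"
    using i by (intro order_stat_desc_eqI) simp_all
qed

lemma gap_config_exists:
  assumes i: "2 \<le> i" "i \<le> n" and inj: "inj_on x {1..n}"
  obtains a b S where "(a, b, S) \<in> gap_configs n i" "gap_config {1..n} x a b S"
proof -
  obtain a where a: "a \<in> {1..n}" "order_stat_desc n x 1 = x a"
    using order_stat_desc_mem[of 1 n x] i by auto
  obtain b where b: "b \<in> {1..n}" "order_stat_desc n x i = x b"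
    using order_stat_desc_mem[of i n x] i by auto
  have "card {j\<in>{1..n}. x a < x j} = 0"
    using order_stat_desc_le_iff[of 1 n x "x a"] a i by simp
  then have le_a: "x j \<le> x a" if "j \<in> {1..n}" for j
    using that by (auto simp: not_less)
  have "{j\<in>{1..n}. x b \<le> x j} = insert b {j\<in>{1..n}. x b < x j}"
    using b(1) inj by (auto simp: le_less dest: inj_onD)
  then have "i \<le> Suc (card {j\<in>{1..n}. x b < x j})"
    using order_stat_desc_le_card[of i n x] b(2) i by simp
  moreover have "card {j\<in>{1..n}. x b < x j} < i"
    using order_stat_desc_le_iff[of i n x "x b"] b(2) i by simp
  ultimately have card_above: "card {j\<in>{1..n}. x b < x j} = i - 1"
    by linarith
  then have "0 < card {j\<in>{1..n}. x b < x j}"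
    using i by simp
  then obtain j where "j \<in> {1..n}" "x b < x j"
    unfolding card_gt_0_iff by blast
  then have ba: "x b < x a"
    using le_a[of j] by linarith
  define S where "S = {j\<in>{1..n}. x b < x j} - {a}"
  have "card S = i - 2"
    using card_above ba a(1) by (simp add: S_def)
  then have "(a, b, S) \<in> gap_configs n i"
    using a(1) b(1) ba by (auto simp: gap_configs_def S_def)
  moreover have "gap_config {1..n} x a b S"
    using ba le_a by (auto simp: gap_config_def S_def)
  ultimately show ?thesis
    using that by blast
qed

lemma gap_config_set_eq:
  assumes "gap_config I x a b S" "S \<subseteq> I - {a, b}"
  shows "S = {j\<in>I - {a, b}. x b < x j}"
proof (intro equalityI subsetI)
  fix j assume j: "j \<in> {j\<in>I - {a, b}. x b < x j}"
  show "j \<in> S"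
  proof (rule ccontr)
    assume "j \<notin> S"
    then have "x j \<le> x b"
      using assms(1) j unfolding gap_config_def by auto
    then show False
      using j by simp
  qed
qed (use assms in \<open>auto simp: gap_config_def\<close>)

lemma gap_config_unique:
  assumes i: "2 \<le> i" "i \<le> n" and inj: "inj_on x {1..n}"
    and abS: "(a, b, S) \<in> gap_configs n i" "gap_config {1..n} x a b S"
    and abS': "(a', b', S') \<in> gap_configs n i" "gap_config {1..n} x a' b' S'"
  shows "(a, b, S) = (a', b', S')"
proof -
  have "a \<in> {1..n}" "a' \<in> {1..n}" "b \<in> {1..n}" "b' \<in> {1..n}"
    using abS(1) abS'(1) by (auto simp: gap_configs_def)
  moreover have "x a = x a'" "x b = x b'"
    using gap_config_order_stat_desc[OF i abS] gap_config_order_stat_desc[OF i abS'] by simp_all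
  ultimately have "a = a'" "b = b'"
    using inj by (auto dest: inj_onD)
  moreover have "S = {j\<in>{1..n} - {a, b}. x b < x j}"
    using abS by (intro gap_config_set_eq) (simp_all add: gap_configs_def)
  moreover have "S' = {j\<in>{1..n} - {a', b'}. x b' < x j}"
    using abS' by (intro gap_config_set_eq) (simp_all add: gap_configs_def)
  ultimately show ?thesis by simp
qed

lemma sum_gap_configs_eq_gap_stat:
  fixes h :: "real \<Rightarrow> 'b::comm_monoid_add"
  assumes i: "2 \<le> i" "i \<le> n" and inj: "inj_on x {1..n}"
  shows "(\<Sum>(a, b, S)\<in>gap_configs n i. if gap_config {1..n} x a b S then h (x a - x b) else 0)
    = h (gap_stat n x i)"
proof -
  obtain a0 b0 S0 where t0: "(a0, b0, S0) \<in> gap_configs n i" "gap_config {1..n} x a0 b0 S0"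
    using gap_config_exists[OF i inj] .
  have "(\<Sum>(a, b, S)\<in>gap_configs n i. if gap_config {1..n} x a b S then h (x a - x b) else 0)
      = (\<Sum>t\<in>gap_configs n i. if t = (a0, b0, S0) then h (x a0 - x b0) else 0)"
  proof (rule sum.cong[OF refl])
    fix t assume "t \<in> gap_configs n i"
    then show "(case t of (a, b, S) \<Rightarrow> if gap_config {1..n} x a b S then h (x a - x b) else 0)
        = (if t = (a0, b0, S0) then h (x a0 - x b0) else 0)"
    proof (cases t)
      case (fields a b S)
      then show ?thesis
        using gap_config_unique[OF i inj _ _ t0, of a b S] \<open>t \<in> gap_configs n i\<close> t0(2)
        by (cases "gap_config {1..n} x a b S") auto
    qed
  qed
  also have "\<dots> = h (x a0 - x b0)"
    using t0(1) finite_gap_configs by simp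
  also have "x a0 - x b0 = gap_stat n x i"
    using gap_config_order_stat_desc[OF i t0] by (simp add: gap_stat_def)
  finally show ?thesis .
qed

lemma prod_if_1_0:
  "finite J \<Longrightarrow> (\<Prod>j\<in>J. if P j then 1 else 0 :: 'a::comm_semiring_1) = (if \<forall>j\<in>J. P j then 1 else 0)"
  by (cases "\<forall>j\<in>J. P j") (auto intro!: prod_zero prod.neutral)

definition config_factor :: "nat set \<Rightarrow> nat \<Rightarrow> real \<Rightarrow> real \<Rightarrow> real \<Rightarrow> ennreal" where
  "config_factor S j u v t = (if (if j \<in> S then v < t \<and> t \<le> u else t \<le> v) then 1 else 0)"

lemma measurable_config_factor [measurable]:
  "(\<lambda>(u, v, t). config_factor S j u v t) \<in> borel_measurable (borel \<Otimes>\<^sub>M borel \<Otimes>\<^sub>M borel)"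
  by (cases "j \<in> S") (simp_all add: config_factor_def)

lemma gap_config_indicator_eq_prod:
  fixes h :: "real \<Rightarrow> ennreal"
  assumes "S \<subseteq> I - {a, b}" "finite I"
  shows "(if x b < x a then h (x a - x b) else 0) * (\<Prod>j\<in>I - {a, b}. config_factor S j (x a) (x b) (x j))
    = (if gap_config I x a b S then h (x a - x b) else 0)"
proof -
  have "(\<Prod>j\<in>I - {a, b}. config_factor S j (x a) (x b) (x j)) =
     (if \<forall>j\<in>I - {a, b}. if j \<in> S then x b < x j \<and> x j \<le> x a else x j \<le> x b then 1 else 0)"
    unfolding config_factor_def using assms(2) by (intro prod_if_1_0) simp
  moreover have "gap_config I x a b S \<longleftrightarrow>
      x b < x a \<and> (\<forall>j\<in>I - {a, b}. if j \<in> S then x b < x j \<and> x j \<le> x a else x j \<le> x b)"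
    unfolding gap_config_def using assms(1) by auto
  ultimately show ?thesis
    by auto
qed

section \<open>Integrals over finite products\<close>

lemma measurable_Pair3_compose_split [measurable_dest]:
  assumes f: "(\<lambda>(u, v, t). f u v t) \<in> measurable (M1 \<Otimes>\<^sub>M M2 \<Otimes>\<^sub>M M3) N"
    and g: "g \<in> measurable M M1" and h: "h \<in> measurable M M2" and k: "k \<in> measurable M M3"
  shows "(\<lambda>x. f (g x) (h x) (k x)) \<in> measurable M N"
  using measurable_compose[OF measurable_Pair[OF g measurable_Pair[OF h k]] f] by simp

lemma nn_integral_PiM_two_coords:
  fixes N :: "real measure" and F :: "real \<Rightarrow> real \<Rightarrow> ennreal"
    and \<phi> :: "'i \<Rightarrow> real \<Rightarrow> real \<Rightarrow> real \<Rightarrow> ennreal"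
  assumes "sigma_finite_measure N" and [measurable_cong]: "sets N = sets borel"
    and J: "finite J" "a \<notin> J" "b \<notin> J" "a \<noteq> b"
    and [measurable]: "(\<lambda>(u, v). F u v) \<in> borel_measurable (borel \<Otimes>\<^sub>M borel)"
      "\<And>j. (\<lambda>(u, v, t). \<phi> j u v t) \<in> borel_measurable (borel \<Otimes>\<^sub>M borel \<Otimes>\<^sub>M borel)"
  shows "(\<integral>\<^sup>+x. F (x a) (x b) * (\<Prod>j\<in>J. \<phi> j (x a) (x b) (x j)) \<partial>PiM (insert a (insert b J)) (\<lambda>_. N))
    = (\<integral>\<^sup>+v. \<integral>\<^sup>+u. F u v * (\<Prod>j\<in>J. \<integral>\<^sup>+t. \<phi> j u v t \<partial>N) \<partial>N \<partial>N)"
proof -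
  interpret product_sigma_finite "\<lambda>_::'i. N"
    using assms(1) by (simp add: product_sigma_finite_def)
  define \<Psi> where "\<Psi> u v = F u v * (\<Prod>j\<in>J. \<integral>\<^sup>+t. \<phi> j u v t \<partial>N)" for u v
  have [measurable]: "(\<lambda>(u, v). \<Psi> u v) \<in> borel_measurable (borel \<Otimes>\<^sub>M borel)"
    unfolding \<Psi>_def by measurable
  have "insert a (insert b J) = {a, b} \<union> J" "{a, b} \<inter> J = {}"
    using J by auto
  then have "(\<integral>\<^sup>+x. F (x a) (x b) * (\<Prod>j\<in>J. \<phi> j (x a) (x b) (x j)) \<partial>PiM (insert a (insert b J)) (\<lambda>_. N))
     = (\<integral>\<^sup>+x. (\<integral>\<^sup>+y. (\<lambda>x. F (x a) (x b) * (\<Prod>j\<in>J. \<phi> j (x a) (x b) (x j))) (merge {a, b} J (x, y))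
          \<partial>PiM J (\<lambda>_. N)) \<partial>PiM {a, b} (\<lambda>_. N))"
    using J by (simp only:) (rule product_nn_integral_fold; simp)
  also have "\<dots> = (\<integral>\<^sup>+x. \<Psi> (x a) (x b) \<partial>PiM {a, b} (\<lambda>_. N))"
  proof (intro nn_integral_cong)
    fix x
    have "(\<integral>\<^sup>+y. (\<lambda>x. F (x a) (x b) * (\<Prod>j\<in>J. \<phi> j (x a) (x b) (x j))) (merge {a, b} J (x, y))
          \<partial>PiM J (\<lambda>_. N)) = (\<integral>\<^sup>+y. F (x a) (x b) * (\<Prod>j\<in>J. \<phi> j (x a) (x b) (y j)) \<partial>PiM J (\<lambda>_. N))"
      using J by (intro nn_integral_cong prod.cong refl arg_cong2[where f = "(*)"]) (auto simp: merge_def)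
    also have "\<dots> = F (x a) (x b) * (\<integral>\<^sup>+y. (\<Prod>j\<in>J. \<phi> j (x a) (x b) (y j)) \<partial>PiM J (\<lambda>_. N))"
      by (intro nn_integral_cmult) measurable
    also have "\<dots> = \<Psi> (x a) (x b)"
      unfolding \<Psi>_def using J by (subst product_nn_integral_prod) auto
    finally show "(\<integral>\<^sup>+y. (\<lambda>x. F (x a) (x b) * (\<Prod>j\<in>J. \<phi> j (x a) (x b) (x j))) (merge {a, b} J (x, y))
          \<partial>PiM J (\<lambda>_. N)) = \<Psi> (x a) (x b)" .
  qed
  also have "\<dots> = (\<integral>\<^sup>+x. (\<integral>\<^sup>+y. \<Psi> ((x(a := y)) a) ((x(a := y)) b) \<partial>N) \<partial>PiM {b} (\<lambda>_. N))"
    by (rule product_nn_integral_insert) (use J in auto)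
  also have "\<dots> = (\<integral>\<^sup>+x. (\<lambda>v. \<integral>\<^sup>+u. \<Psi> u v \<partial>N) (x b) \<partial>PiM {b} (\<lambda>_. N))"
    using J by simp
  also have "\<dots> = (\<integral>\<^sup>+v. \<integral>\<^sup>+u. \<Psi> u v \<partial>N \<partial>N)"
    by (rule product_nn_integral_singleton) measurable
  finally show ?thesis
    unfolding \<Psi>_def .
qed

lemma AE_PiM_inj_on:
  fixes N :: "real measure" and I :: "'i set"
  assumes N: "sigma_finite_measure N" "sets N = sets borel" and atomless: "\<And>v. emeasure N {v} = 0"
    and I: "finite I"
  shows "AE x in PiM I (\<lambda>_. N). inj_on x I"
proof -
  have [measurable_cong]: "sets N = sets borel"
    by (fact N(2))
  have "AE x in PiM I (\<lambda>_. N). x a \<noteq> x b" if ab: "a \<in> I" "b \<in> I" "a \<noteq> b" for a b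
  proof -
    let ?P = "PiM I (\<lambda>_. N)"
    have I_eq: "insert a (insert b (I - {a, b})) = I"
      using ab by auto
    have tie [measurable]: "{x \<in> space ?P. x a = x b} \<in> sets ?P"
      using ab by measurable
    have "emeasure ?P {x \<in> space ?P. x a = x b} = (\<integral>\<^sup>+x. indicator {x \<in> space ?P. x a = x b} x \<partial>?P)"
      by (rule nn_integral_indicator[OF tie, symmetric])
    also have "\<dots> = (\<integral>\<^sup>+x. (if x a = x b then 1 else 0) * (\<Prod>j\<in>I - {a, b}. 1) \<partial>?P)"
      by (intro nn_integral_cong) (simp add: indicator_def)
    also have "\<dots> = (\<integral>\<^sup>+v. \<integral>\<^sup>+u. (if u = v then 1 else 0) * (\<Prod>j\<in>I - {a, b}. \<integral>\<^sup>+t. 1 \<partial>N) \<partial>N \<partial>N)"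
      using nn_integral_PiM_two_coords[OF N, of "I - {a, b}" a b "\<lambda>u v. if u = v then 1 else 0"
          "\<lambda>j u v t. 1"] ab I by (simp add: I_eq)
    also have "\<dots> = (\<integral>\<^sup>+v. \<integral>\<^sup>+u. (\<Prod>j\<in>I - {a, b}. \<integral>\<^sup>+t. 1 \<partial>N) * indicator {v} u \<partial>N \<partial>N)"
      by (intro nn_integral_cong) (simp add: indicator_def)
    also have "\<dots> = (\<integral>\<^sup>+v. (\<Prod>j\<in>I - {a, b}. \<integral>\<^sup>+t. 1 \<partial>N) * emeasure N {v} \<partial>N)"
      using N(2) by (intro nn_integral_cong nn_integral_cmult_indicator) simp
    also have "\<dots> = 0"
      by (simp add: atomless)
    finally show ?thesis
      using tie by (intro AE_I'[of "{x \<in> space ?P. x a = x b}"]) auto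
  qed
  then have "AE x in PiM I (\<lambda>_. N). \<forall>a\<in>I. \<forall>b\<in>I. a \<noteq> b \<longrightarrow> x a \<noteq> x b"
    using I by (intro AE_finite_allI) auto
  then show ?thesis
    by eventually_elim (auto simp: inj_on_def)
qed

section \<open>Samples from a density on the unit interval\<close>

locale unit_interval_density =
  fixes g G :: "real \<Rightarrow> real"
  assumes g_nonneg: "\<And>x. 0 \<le> g x"
    and g_measurable [measurable]: "g \<in> borel_measurable borel"
    and g_supp: "\<And>x. x \<notin> {0..1} \<Longrightarrow> g x = 0"
    and G_def: "\<And>z. G z = (\<integral>x\<in>{0..z}. g x \<partial>lborel)"
    and prob_space_density: "prob_space (density lborel (\<lambda>x. ennreal (g x)))"
begin

abbreviation \<Gamma> :: "real measure" where
  "\<Gamma> \<equiv> density lborel (\<lambda>x. ennreal (g x))"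

sublocale \<Gamma>: prob_space \<Gamma>
  by (fact prob_space_density)

lemma sets_\<Gamma> [measurable_cong]: "sets \<Gamma> = sets borel"
  by simp

lemma integrable_g: "integrable lborel g"
proof -
  have "(\<integral>\<^sup>+x. ennreal (g x) \<partial>lborel) = 1"
    using \<Gamma>.emeasure_space_1 by (simp add: emeasure_density)
  then show ?thesis
    using g_nonneg by (intro integrableI_nonneg) auto
qed

lemma G_nonneg: "0 \<le> G z"
  unfolding G_def set_lebesgue_integral_def
  by (intro Bochner_Integration.integral_nonneg) (simp add: g_nonneg)

lemma G_eq_emeasure: "ennreal (G z) = emeasure \<Gamma> {..z}"
proof -
  have int: "integrable lborel (\<lambda>x. indicator {0..z} x *\<^sub>R g x)"
    by (intro integrable_mult_indicator integrable_g) auto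
  have "ennreal (G z) = (\<integral>\<^sup>+x. ennreal (indicator {0..z} x *\<^sub>R g x) \<partial>lborel)"
    using nn_integral_eq_integral[OF int] g_nonneg
    by (simp add: G_def set_lebesgue_integral_def indicator_def)
  also have "\<dots> = (\<integral>\<^sup>+x. ennreal (g x) * indicator {..z} x \<partial>lborel)"
    using g_supp by (intro nn_integral_cong) (auto simp: indicator_def)
  also have "\<dots> = emeasure \<Gamma> {..z}"
    by (simp add: emeasure_density)
  finally show ?thesis .
qed

lemma G_eq_measure: "G z = measure \<Gamma> {..z}"
  using G_eq_emeasure[of z] G_nonneg[of z] by (simp add: \<Gamma>.emeasure_eq_measure)

lemma G_diff_eq_emeasure:
  assumes "v \<le> u"
  shows "ennreal (G u - G v) = emeasure \<Gamma> {v<..u}"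
proof -
  have "{v<..u} = {..u} - {..v}"
    by auto
  then have "measure \<Gamma> {v<..u} = measure \<Gamma> {..u} - measure \<Gamma> {..v}"
    using assms by (simp add: \<Gamma>.finite_measure_Diff)
  then show ?thesis
    by (simp add: \<Gamma>.emeasure_eq_measure G_eq_measure)
qed

lemma G_mono: "v \<le> u \<Longrightarrow> G v \<le> G u"
  unfolding G_eq_measure by (intro \<Gamma>.finite_measure_mono) auto

lemma G_measurable [measurable]: "G \<in> borel_measurable borel"
  by (intro borel_measurable_mono monoI G_mono)

lemma G_Lipschitz:
  assumes bound: "\<And>x. g x \<le> D" and "v \<le> u"
  shows "G u - G v \<le> D * (u - v)"
proof -
  have "0 \<le> D"
    using bound[of 0] g_nonneg[of 0] by simp
  have "ennreal (G u - G v) = (\<integral>\<^sup>+x. ennreal (g x) * indicator {v<..u} x \<partial>lborel)"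
    using G_diff_eq_emeasure[OF \<open>v \<le> u\<close>] by (simp add: emeasure_density)
  also have "\<dots> \<le> (\<integral>\<^sup>+x. ennreal D * indicator {v<..u} x \<partial>lborel)"
    by (intro nn_integral_mono mult_right_mono) (auto simp: bound ennreal_leI)
  also have "\<dots> = ennreal (D * (u - v))"
    using \<open>v \<le> u\<close> \<open>0 \<le> D\<close> by (simp add: nn_integral_cmult_indicator ennreal_mult)
  finally show ?thesis
    using \<open>0 \<le> D\<close> \<open>v \<le> u\<close> by (subst (asm) ennreal_le_iff) auto
qed

lemma AE_\<Gamma>_inj_on: "finite I \<Longrightarrow> AE x in PiM I (\<lambda>_. \<Gamma>). inj_on x I"
proof (rule AE_PiM_inj_on)
  show "emeasure \<Gamma> {v} = 0" for v
  proof -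
    have "emeasure \<Gamma> {v} = (\<integral>\<^sup>+x. ennreal (g x) * indicator {v} x \<partial>lborel)"
      by (rule emeasure_density) auto
    also have "\<dots> = (\<integral>\<^sup>+(x::real). 0 \<partial>lborel)"
    proof (rule nn_integral_cong_AE)
      show "AE x in lborel. ennreal (g x) * indicator {v} x = 0"
        using AE_lborel_singleton[of v] by eventually_elim auto
    qed
    finally show ?thesis
      by simp
  qed
qed (simp_all add: \<Gamma>.sigma_finite_measure_axioms)

lemma nn_integral_config_factor:
  assumes "v < u"
  shows "(\<integral>\<^sup>+t. config_factor S j u v t \<partial>\<Gamma>) = (if j \<in> S then ennreal (G u - G v) else ennreal (G v))"
proof (cases "j \<in> S")
  case True
  have "(\<integral>\<^sup>+t. config_factor S j u v t \<partial>\<Gamma>) = (\<integral>\<^sup>+t. indicator {v<..u} t \<partial>\<Gamma>)"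
    using True by (intro nn_integral_cong) (simp add: config_factor_def indicator_def)
  then show ?thesis
    using True G_diff_eq_emeasure[of v u] assms by simp
next
  case False
  have "(\<integral>\<^sup>+t. config_factor S j u v t \<partial>\<Gamma>) = (\<integral>\<^sup>+t. indicator {..v} t \<partial>\<Gamma>)"
    using False by (intro nn_integral_cong) (simp add: config_factor_def indicator_def)
  then show ?thesis
    using False G_eq_emeasure[of v] by simp
qed

lemma prod_nn_integral_config_factor:
  assumes "finite J" "S \<subseteq> J" "v < u"
  shows "(\<Prod>j\<in>J. \<integral>\<^sup>+t. config_factor S j u v t \<partial>\<Gamma>)
    = ennreal ((G u - G v) ^ card S * G v ^ (card J - card S))"
proof -
  have "(\<Prod>j\<in>J. \<integral>\<^sup>+t. config_factor S j u v t \<partial>\<Gamma>)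
      = (\<Prod>j\<in>J. if j \<in> S then ennreal (G u - G v) else ennreal (G v))"
    using assms(3) by (intro prod.cong refl nn_integral_config_factor)
  also have "\<dots> = ennreal (G u - G v) ^ card S * ennreal (G v) ^ (card J - card S)"
    using assms(1,2) by (simp add: prod.If_cases Int_absorb1 card_Diff_subset[symmetric] finite_subset
        Diff_eq[symmetric])
  also have "\<dots> = ennreal ((G u - G v) ^ card S * G v ^ (card J - card S))"
    using G_mono[of v u] assms(3) G_nonneg[of v] by (simp add: ennreal_mult' ennreal_power)
  finally show ?thesis .
qed

definition gap_integral :: "(real \<Rightarrow> ennreal) \<Rightarrow> nat \<Rightarrow> nat \<Rightarrow> ennreal" where
  "gap_integral h n i =
     (\<integral>\<^sup>+v. \<integral>\<^sup>+u. (if v < u then h (u - v) else 0) * ennreal ((G u - G v) ^ (i - 2) * G v ^ (n - i)) \<partial>\<Gamma> \<partial>\<Gamma>)"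

lemma nn_integral_gap_config_term:
  fixes h :: "real \<Rightarrow> ennreal"
  assumes i: "2 \<le> i" "i \<le> n" and [measurable]: "h \<in> borel_measurable borel"
    and abS: "(a, b, S) \<in> gap_configs n i"
  shows "(\<integral>\<^sup>+x. (if x b < x a then h (x a - x b) else 0)
      * (\<Prod>j\<in>{1..n} - {a, b}. config_factor S j (x a) (x b) (x j)) \<partial>PiM {1..n} (\<lambda>_. \<Gamma>))
    = gap_integral h n i"
proof -
  let ?J = "{1..n} - {a, b}"
  have ab: "a \<in> {1..n}" "b \<in> {1..n}" "a \<noteq> b" and S: "S \<subseteq> ?J" "card S = i - 2"
    using abS by (auto simp: gap_configs_def)
  have "insert a (insert b ?J) = {1..n}"
    using ab by auto
  then have "(\<integral>\<^sup>+x. (if x b < x a then h (x a - x b) else 0)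
      * (\<Prod>j\<in>?J. config_factor S j (x a) (x b) (x j)) \<partial>PiM {1..n} (\<lambda>_. \<Gamma>))
    = (\<integral>\<^sup>+v. \<integral>\<^sup>+u. (if v < u then h (u - v) else 0)
      * (\<Prod>j\<in>?J. \<integral>\<^sup>+t. config_factor S j u v t \<partial>\<Gamma>) \<partial>\<Gamma> \<partial>\<Gamma>)"
    using nn_integral_PiM_two_coords[OF \<Gamma>.sigma_finite_measure_axioms sets_\<Gamma>, of ?J a b
        "\<lambda>u v. if v < u then h (u - v) else 0" "config_factor S"] ab
    by simp
  also have "\<dots> = gap_integral h n i"
    unfolding gap_integral_def
  proof (intro nn_integral_cong)
    fix u v :: real
    have "card ?J = n - 2" "n - 2 - (i - 2) = n - i"
      using ab i by (auto simp: card_Diff_subset)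
    then have "v < u \<Longrightarrow> (\<Prod>j\<in>?J. \<integral>\<^sup>+t. config_factor S j u v t \<partial>\<Gamma>)
        = ennreal ((G u - G v) ^ (i - 2) * G v ^ (n - i))"
      using prod_nn_integral_config_factor[of ?J S v u] S by simp
    then show "(if v < u then h (u - v) else 0) * (\<Prod>j\<in>?J. \<integral>\<^sup>+t. config_factor S j u v t \<partial>\<Gamma>)
        = (if v < u then h (u - v) else 0) * ennreal ((G u - G v) ^ (i - 2) * G v ^ (n - i))"
      by simp
  qed
  finally show ?thesis .
qed

lemma nn_integral_gap_stat:
  fixes h :: "real \<Rightarrow> ennreal"
  assumes i: "2 \<le> i" "i \<le> n" and [measurable]: "h \<in> borel_measurable borel"
  shows "(\<integral>\<^sup>+x. h (gap_stat n x i) \<partial>PiM {1..n} (\<lambda>_. \<Gamma>))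
    = of_nat (n * (n - 1) * ((n - 2) choose (i - 2))) * gap_integral h n i"
proof -
  let ?P = "PiM {1..n} (\<lambda>_. \<Gamma>)"
  define T where "T = (\<lambda>(a, b, S) x. (if x b < x a then h (x a - x b) else 0)
    * (\<Prod>j\<in>{1..n} - {a, b}. config_factor S j (x a) (x b) (x j)))"
  have T_measurable: "T t \<in> borel_measurable ?P" if "t \<in> gap_configs n i" for t
  proof -
    obtain a b S where t: "t = (a, b, S)"
      by (cases t)
    then have "a \<in> {1..n}" "b \<in> {1..n}"
      using that by (auto simp: gap_configs_def)
    then show ?thesis
      unfolding t T_def prod.case by measurable
  qed
  have "(\<integral>\<^sup>+x. h (gap_stat n x i) \<partial>?P) = (\<integral>\<^sup>+x. (\<Sum>t\<in>gap_configs n i. T t x) \<partial>?P)"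
  proof (intro nn_integral_cong_AE)
    show "AE x in ?P. h (gap_stat n x i) = (\<Sum>t\<in>gap_configs n i. T t x)"
      using AE_\<Gamma>_inj_on[OF finite_atLeastAtMost]
    proof eventually_elim
      case (elim x)
      have "(\<Sum>t\<in>gap_configs n i. T t x) = (\<Sum>(a, b, S)\<in>gap_configs n i.
          if gap_config {1..n} x a b S then h (x a - x b) else 0)"
        unfolding T_def gap_configs_def by (intro sum.cong refl) (auto simp: gap_config_indicator_eq_prod)
      also have "\<dots> = h (gap_stat n x i)"
        by (rule sum_gap_configs_eq_gap_stat[OF i elim])
      finally show ?case by simp
    qed
  qed
  also have "\<dots> = (\<Sum>t\<in>gap_configs n i. \<integral>\<^sup>+x. T t x \<partial>?P)"
    using T_measurable by (intro nn_integral_sum) auto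
  also have "\<dots> = (\<Sum>t\<in>gap_configs n i. gap_integral h n i)"
    unfolding T_def using nn_integral_gap_config_term[OF i] by (intro sum.cong) auto
  also have "\<dots> = of_nat (n * (n - 1) * ((n - 2) choose (i - 2))) * gap_integral h n i"
    by (simp add: card_gap_configs)
  finally show ?thesis .
qed

lemma nn_integral_\<Gamma>_shift:
  assumes [measurable]: "F \<in> borel_measurable borel"
  shows "(\<integral>\<^sup>+u. F u \<partial>\<Gamma>) = (\<integral>\<^sup>+w. ennreal (g (v + w)) * F (v + w) \<partial>lborel)"
proof -
  have "(\<integral>\<^sup>+u. F u \<partial>\<Gamma>) = (\<integral>\<^sup>+u. ennreal (g u) * F u \<partial>distr lborel borel ((+) v))"
    by (simp add: nn_integral_density lborel_distr_plus)
  also have "\<dots> = (\<integral>\<^sup>+w. ennreal (g (v + w)) * F (v + w) \<partial>lborel)"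
    by (rule nn_integral_distr) simp_all
  finally show ?thesis .
qed

definition gap_kernel :: "nat \<Rightarrow> nat \<Rightarrow> real \<Rightarrow> ennreal" where
  "gap_kernel n i w = (\<integral>\<^sup>+v. (if 0 < w then
     ennreal (g v * g (v + w) * ((G (v + w) - G v) ^ (i - 2) * G v ^ (n - i))) else 0) \<partial>lborel)"

lemma gap_integral_eq_kernel:
  fixes h :: "real \<Rightarrow> ennreal"
  assumes [measurable]: "h \<in> borel_measurable borel"
  shows "gap_integral h n i = (\<integral>\<^sup>+w. h w * gap_kernel n i w \<partial>lborel)"
proof -
  define F where "F u v = (if v < u then h (u - v) else 0) * ennreal ((G u - G v) ^ (i - 2) * G v ^ (n - i))"
    for u v
  have [measurable]: "(\<lambda>(u, v). F u v) \<in> borel_measurable (borel \<Otimes>\<^sub>M borel)"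
    unfolding F_def by measurable
  have "gap_integral h n i = (\<integral>\<^sup>+v. ennreal (g v) * (\<integral>\<^sup>+u. F u v \<partial>\<Gamma>) \<partial>lborel)"
    unfolding gap_integral_def F_def by (rule nn_integral_density) measurable
  also have "\<dots> = (\<integral>\<^sup>+v. ennreal (g v) * (\<integral>\<^sup>+w. ennreal (g (v + w)) * F (v + w) v \<partial>lborel) \<partial>lborel)"
    by (intro nn_integral_cong arg_cong2[where f = "(*)"] refl nn_integral_\<Gamma>_shift) measurable
  also have "\<dots> = (\<integral>\<^sup>+v. \<integral>\<^sup>+w. ennreal (g v) * (ennreal (g (v + w)) * F (v + w) v) \<partial>lborel \<partial>lborel)"
    by (intro nn_integral_cong nn_integral_cmult[symmetric]) measurable
  also have "\<dots> = (\<integral>\<^sup>+w. \<integral>\<^sup>+v. ennreal (g v) * (ennreal (g (v + w)) * F (v + w) v) \<partial>lborel \<partial>lborel)"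
    by (rule lborel_pair.Fubini') measurable
  also have "\<dots> = (\<integral>\<^sup>+w. h w * gap_kernel n i w \<partial>lborel)"
  proof (intro nn_integral_cong)
    fix w :: real
    have "ennreal (g v) * (ennreal (g (v + w)) * F (v + w) v)
        = h w * (if 0 < w then ennreal (g v * g (v + w) * ((G (v + w) - G v) ^ (i - 2) * G v ^ (n - i)))
          else 0)" for v
      using G_mono[of v "v + w"] G_nonneg[of v] g_nonneg[of v] g_nonneg[of "v + w"]
      by (simp add: F_def ennreal_mult' ennreal_mult mult_ac)
    then show "(\<integral>\<^sup>+v. ennreal (g v) * (ennreal (g (v + w)) * F (v + w) v) \<partial>lborel) = h w * gap_kernel n i w"
      unfolding gap_kernel_def by (simp add: nn_integral_cmult)
  qed
  finally show ?thesis .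
qed

lemma gap_kernel_eq:
  assumes "w \<noteq> 0"
  shows "gap_kernel n i w = indicator {0..1} w *
    (\<integral>\<^sup>+z\<in>{0..1 - w}. ennreal ((G (w + z) - G z) ^ (i - 2) * g (w + z) * g z * G z ^ (n - i)) \<partial>lborel)"
proof -
  have "(if 0 < w then ennreal (g z * g (z + w) * ((G (z + w) - G z) ^ (i - 2) * G z ^ (n - i))) else 0)
      = indicator {0..1} w *
        (ennreal ((G (w + z) - G z) ^ (i - 2) * g (w + z) * g z * G z ^ (n - i)) * indicator {0..1 - w} z)"
    for z
  proof (cases "0 < w \<and> z \<in> {0..1 - w}")
    case False
    then have "w < 0 \<or> g z = 0 \<or> g (z + w) = 0"
      using assms g_supp[of z] g_supp[of "z + w"] by auto
    then show ?thesis
      using False by (auto simp: indicator_def)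
  qed (auto simp: indicator_def add.commute mult_ac)
  then show ?thesis
    unfolding gap_kernel_def by (simp add: nn_integral_cmult)
qed

lemma inverse_gap_term_le:
  assumes bound: "\<And>x. g x \<le> D" and "3 \<le> i" "v < u"
  shows "ennreal (1 / (u - v)) * ennreal ((G u - G v) ^ (i - 2) * G v ^ (n - i))
    \<le> ennreal D * ennreal ((G u - G v) ^ (i - 3) * G v ^ (n - i))"
proof -
  define d where "d = G u - G v"
  have "0 \<le> d" "0 \<le> G v ^ (n - i)"
    unfolding d_def using G_mono[of v u] G_nonneg[of v] \<open>v < u\<close> by simp_all
  have "d / (u - v) \<le> D"
    unfolding d_def using G_Lipschitz[OF bound, of v u] \<open>v < u\<close> by (simp add: divide_le_eq mult.commute)
  have "d ^ (i - 2) = d * d ^ (i - 3)"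
    using \<open>3 \<le> i\<close> by (metis Suc_diff_Suc numeral_3_eq_3 numeral_2_eq_2 Suc_le_lessD power_Suc)
  then have "1 / (u - v) * (d ^ (i - 2) * G v ^ (n - i)) = d / (u - v) * (d ^ (i - 3) * G v ^ (n - i))"
    by simp
  also have "\<dots> \<le> D * (d ^ (i - 3) * G v ^ (n - i))"
    using \<open>d / (u - v) \<le> D\<close> \<open>0 \<le> d\<close> \<open>0 \<le> G v ^ (n - i)\<close> by (intro mult_right_mono) simp_all
  finally show ?thesis
    unfolding d_def using \<open>v < u\<close> \<open>0 \<le> d\<close> \<open>0 \<le> G v ^ (n - i)\<close> order_trans[OF _ \<open>d / (u - v) \<le> D\<close>]
    by (simp add: d_def ennreal_mult[symmetric] ennreal_leI)
qed

lemma gap_integral_inverse_le: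
  assumes bound: "\<And>x. g x \<le> D" and i: "3 \<le> i"
  shows "gap_integral (\<lambda>w. ennreal (1 / w)) n i \<le> ennreal D * gap_integral (\<lambda>_. 1) (n - 1) (i - 1)"
proof -
  have "i - 1 - 2 = i - 3" "n - 1 - (i - 1) = n - i"
    using i by auto
  then have "ennreal D * gap_integral (\<lambda>_. 1) (n - 1) (i - 1) = (\<integral>\<^sup>+v. \<integral>\<^sup>+u.
      ennreal D * ((if v < u then 1 else 0) * ennreal ((G u - G v) ^ (i - 3) * G v ^ (n - i))) \<partial>\<Gamma> \<partial>\<Gamma>)"
    unfolding gap_integral_def by (simp add: nn_integral_cmult)
  moreover have "gap_integral (\<lambda>w. ennreal (1 / w)) n i \<le> \<dots>"
    unfolding gap_integral_def using inverse_gap_term_le[OF bound i]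
    by (intro nn_integral_mono) auto
  ultimately show ?thesis
    by simp
qed

lemma gap_integral_const_eq:
  assumes "2 \<le> i" "i \<le> n"
  shows "gap_integral (\<lambda>_. 1) n i = ennreal (1 / real (n * (n - 1) * ((n - 2) choose (i - 2))))"
proof -
  define c where "c = n * (n - 1) * ((n - 2) choose (i - 2))"
  have "0 < c"
    unfolding c_def using assms by simp
  interpret P: prob_space "PiM {1..n} (\<lambda>_. \<Gamma>)"
    by (intro prob_space_PiM prob_space_density)
  have "of_nat c * gap_integral (\<lambda>_. 1) n i = 1"
    using nn_integral_gap_stat[OF assms, of "\<lambda>_. 1"] P.emeasure_space_1 by (simp add: c_def)
  then have "gap_integral (\<lambda>_. 1) n i \<noteq> \<top>"
    using \<open>0 < c\<close> by (auto simp: ennreal_mult_top)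
  then obtain r where r: "gap_integral (\<lambda>_. 1) n i = ennreal r" "0 \<le> r"
    by (cases "gap_integral (\<lambda>_. 1) n i") auto
  have "ennreal (real c * r) = of_nat c * gap_integral (\<lambda>_. 1) n i"
    using r by (simp add: ennreal_mult ennreal_of_nat_eq_real_of_nat)
  then have "real c * r = 1"
    using \<open>of_nat c * gap_integral (\<lambda>_. 1) n i = 1\<close> by (simp only: ennreal_eq_1)
  then show ?thesis
    using r \<open>0 < c\<close> by (simp add: c_def field_simps)
qed

lemma gap_integral_inverse_bound:
  assumes bound: "\<And>x. g x \<le> D" and i: "3 \<le> i" "i \<le> n"
  shows "of_nat (n * (n - 1) * ((n - 2) choose (i - 2))) * gap_integral (\<lambda>w. ennreal (1 / w)) n i
    \<le> ennreal (D * real n / (real i - 2))"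
proof -
  define c1 where "c1 = n * (n - 1) * ((n - 2) choose (i - 2))"
  define c2 where "c2 = (n - 1) * (n - 2) * ((n - 3) choose (i - 3))"
  have "0 \<le> D"
    using bound[of 0] g_nonneg[of 0] by simp
  have "0 < c2"
    unfolding c2_def using i by simp
  have "(i - 2) * ((n - 2) choose (i - 2)) = (n - 2) * ((n - 3) choose (i - 3))"
    using times_binomial_minus1_eq[of "i - 2" "n - 2"] i by (simp add: numeral_3_eq_3 numeral_2_eq_2)
  then have "c1 * (i - 2) = n * c2"
    unfolding c1_def c2_def by (simp add: mult_ac)
  then have "real c1 * real (i - 2) = real n * real c2"
    by (metis of_nat_mult)
  then have c: "real c1 * (real i - 2) = real n * real c2"
    using i by (simp add: of_nat_diff)
  have "gap_integral (\<lambda>_. 1) (n - 1) (i - 1) = ennreal (1 / real c2)"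
    using gap_integral_const_eq[of "i - 1" "n - 1"] i
    by (simp add: c2_def numeral_3_eq_3 numeral_2_eq_2)
  then have "gap_integral (\<lambda>w. ennreal (1 / w)) n i \<le> ennreal D * ennreal (1 / real c2)"
    using gap_integral_inverse_le[OF bound i(1), of n] by simp
  then have "of_nat c1 * gap_integral (\<lambda>w. ennreal (1 / w)) n i
      \<le> of_nat c1 * (ennreal D * ennreal (1 / real c2))"
    by (rule mult_left_mono) simp
  also have "\<dots> = ennreal (real c1 * D / real c2)"
    using \<open>0 \<le> D\<close> by (simp add: ennreal_of_nat_eq_real_of_nat ennreal_mult[symmetric])
  also have "real c1 * D / real c2 = D * real n / (real i - 2)"
    using c \<open>0 < c2\<close> i by (simp add: field_simps)
  finally show ?thesis
    unfolding c1_def .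
qed

end

locale iid_unit_interval_sample = unit_interval_density g G + M: prob_space M
  for g G :: "real \<Rightarrow> real" and M :: "'a measure" +
  fixes \<mu> :: "nat \<Rightarrow> 'a \<Rightarrow> real" and k :: nat
  assumes indep: "M.indep_vars (\<lambda>_. borel) \<mu> {1..k}"
    and distributed: "\<And>j. j \<in> {1..k} \<Longrightarrow> distributed M lborel (\<mu> j) (\<lambda>x. ennreal (g x))"
begin

lemma sample_measurable [measurable]: "j \<in> {1..k} \<Longrightarrow> \<mu> j \<in> borel_measurable M"
  using distributed by (auto simp: distributed_def)

lemma distr_sample_eq_PiM:
  assumes "1 \<le> k"
  shows "distr M (PiM {1..k} (\<lambda>_. borel)) (\<lambda>\<omega>. \<lambda>j\<in>{1..k}. \<mu> j \<omega>) = PiM {1..k} (\<lambda>_. \<Gamma>)"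
proof -
  have "distr M (PiM {1..k} (\<lambda>_. borel)) (\<lambda>\<omega>. \<lambda>j\<in>{1..k}. \<mu> j \<omega>) = PiM {1..k} (\<lambda>j. distr M borel (\<mu> j))"
    using M.indep_vars_iff_distr_eq_PiM'[where I = "{1..k}" and M' = "\<lambda>_. borel" and X = \<mu>] indep assms
    by simp
  also have "\<dots> = PiM {1..k} (\<lambda>_. \<Gamma>)"
  proof (intro PiM_cong refl)
    fix j assume "j \<in> {1..k}"
    have "distr M borel (\<mu> j) = distr M lborel (\<mu> j)"
      by (intro distr_cong) auto
    also have "\<dots> = \<Gamma>"
      using distributed[OF \<open>j \<in> {1..k}\<close>] by (simp add: distributed_def)
    finally show "distr M borel (\<mu> j) = \<Gamma>" .
  qed
  finally show ?thesis .
qed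

lemma nn_integral_sample_gap_stat:
  assumes i: "2 \<le> i" "i \<le> k" and [measurable]: "h \<in> borel_measurable borel"
  shows "(\<integral>\<^sup>+\<omega>. h (gap_stat k (\<lambda>j. \<mu> j \<omega>) i) \<partial>M)
    = of_nat (k * (k - 1) * ((k - 2) choose (i - 2))) * gap_integral h k i"
proof -
  have [measurable]: "(\<lambda>x. gap_stat k x i) \<in> borel_measurable (PiM {1..k} (\<lambda>_. borel))"
    using i by (intro measurable_gap_stat) simp_all
  have "(\<integral>\<^sup>+\<omega>. h (gap_stat k (\<lambda>j. \<mu> j \<omega>) i) \<partial>M) = (\<integral>\<^sup>+\<omega>. h (gap_stat k (\<lambda>j\<in>{1..k}. \<mu> j \<omega>) i) \<partial>M)"
    by (intro nn_integral_cong arg_cong[where f = h] gap_stat_cong) simp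
  also have "\<dots> = (\<integral>\<^sup>+x. h (gap_stat k x i) \<partial>distr M (PiM {1..k} (\<lambda>_. borel)) (\<lambda>\<omega>. \<lambda>j\<in>{1..k}. \<mu> j \<omega>))"
    by (rule nn_integral_distr[symmetric]) measurable
  also have "\<dots> = (\<integral>\<^sup>+x. h (gap_stat k x i) \<partial>PiM {1..k} (\<lambda>_. \<Gamma>))"
    using i by (subst distr_sample_eq_PiM) simp_all
  finally show ?thesis
    using nn_integral_gap_stat[OF i] by simp
qed

lemma measurable_sample_gap_stat:
  assumes "2 \<le> i" "i \<le> k"
  shows "(\<lambda>\<omega>. gap_stat k (\<lambda>j. \<mu> j \<omega>) i) \<in> borel_measurable M"
proof -
  have "(\<lambda>\<omega>. \<lambda>j\<in>{1..k}. \<mu> j \<omega>) \<in> measurable M (PiM {1..k} (\<lambda>_. borel))"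
    by (intro measurable_restrict sample_measurable)
  from measurable_compose[OF this measurable_gap_stat[OF assms, of borel]]
  have "(\<lambda>\<omega>. gap_stat k (\<lambda>j\<in>{1..k}. \<mu> j \<omega>) i) \<in> borel_measurable M"
    by simp
  moreover have "gap_stat k (\<lambda>j\<in>{1..k}. \<mu> j \<omega>) i = gap_stat k (\<lambda>j. \<mu> j \<omega>) i" for \<omega>
    by (intro gap_stat_cong) simp
  ultimately show ?thesis
    by simp
qed

lemma distributed_gap_stat:
  assumes i: "2 \<le> i" "i \<le> k"
  shows "distributed M lborel (\<lambda>\<omega>. gap_stat k (\<lambda>j. \<mu> j \<omega>) i)
    (\<lambda>u. indicator {0..1} u * ennreal (real k * (real k - 1) * real ((k - 2) choose (i - 2)))
      * (\<integral>\<^sup>+z\<in>{0..1 - u}. ennreal ((G (u + z) - G z) ^ (i - 2) * g (u + z) * g z * G z ^ (k - i)) \<partial>lborel))"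
    (is "distributed M lborel ?U ?f")
proof -
  let ?C = "real k * (real k - 1) * real ((k - 2) choose (i - 2))"
  have [measurable]: "Measurable.pred (borel \<Otimes>\<^sub>M borel) (\<lambda>x::real \<times> real. snd x \<in> {0..1 - fst x})"
    unfolding atLeastAtMost_iff by measurable
  have [measurable]: "?U \<in> borel_measurable M"
    using i by (rule measurable_sample_gap_stat)
  have [measurable]: "?f \<in> borel_measurable lborel"
    by measurable
  have C: "of_nat (k * (k - 1) * ((k - 2) choose (i - 2))) = ennreal ?C"
    using i by (simp add: of_nat_diff ennreal_of_nat_eq_real_of_nat)
  have "distr M lborel ?U = density lborel ?f"
  proof (rule measure_eqI)
    fix A assume "A \<in> sets (distr M lborel ?U)"
    then have [measurable]: "A \<in> sets borel"
      by simp
    have "emeasure (distr M lborel ?U) A = (\<integral>\<^sup>+x. indicator A x \<partial>distr M lborel ?U)"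
      by (simp add: nn_integral_indicator)
    also have "\<dots> = (\<integral>\<^sup>+\<omega>. indicator A (?U \<omega>) \<partial>M)"
      by (rule nn_integral_distr) simp_all
    also have "\<dots> = of_nat (k * (k - 1) * ((k - 2) choose (i - 2))) * gap_integral (indicator A) k i"
      using i by (intro nn_integral_sample_gap_stat) simp_all
    also have "\<dots> = ennreal ?C * (\<integral>\<^sup>+w. indicator A w * gap_kernel k i w \<partial>lborel)"
      by (simp only: C gap_integral_eq_kernel borel_measurable_indicator \<open>A \<in> sets borel\<close>)
    also have "\<dots> = (\<integral>\<^sup>+w. ennreal ?C * (indicator A w * gap_kernel k i w) \<partial>lborel)"
      by (rule nn_integral_cmult[symmetric]) (simp add: gap_kernel_def)
    also have "\<dots> = (\<integral>\<^sup>+w. ?f w * indicator A w \<partial>lborel)"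
    proof (rule nn_integral_cong_AE)
      show "AE w in lborel. ennreal ?C * (indicator A w * gap_kernel k i w) = ?f w * indicator A w"
        using AE_lborel_singleton[of 0] by eventually_elim (simp add: gap_kernel_eq mult_ac)
    qed
    also have "\<dots> = emeasure (density lborel ?f) A"
      by (rule emeasure_density[symmetric]) simp_all
    finally show "emeasure (distr M lborel ?U) A = emeasure (density lborel ?f) A" .
  qed simp
  then show ?thesis
    unfolding distributed_def by simp
qed

lemma nn_integral_inverse_gap_stat_le:
  assumes bound: "\<forall>x\<in>{0..1}. g x \<le> D" and i: "3 \<le> i" "i \<le> k"
  shows "(\<integral>\<^sup>+\<omega>. ennreal (1 / gap_stat k (\<lambda>j. \<mu> j \<omega>) i) \<partial>M) \<le> ennreal (D * real k / (real i - 2))"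
proof -
  have "0 \<le> D"
    using bound g_nonneg[of 0] by (meson atLeastAtMost_iff order_trans zero_le_one order_refl)
  then have "g x \<le> D" for x
    using bound g_supp[of x] by (cases "x \<in> {0..1}") auto
  then show ?thesis
    using nn_integral_sample_gap_stat[of i "\<lambda>w. ennreal (1 / w)"] gap_integral_inverse_bound[of D i k] i
    by simp
qed

end

theorem lemma10:
  fixes M :: "'a measure" and \<mu> :: "nat \<Rightarrow> 'a \<Rightarrow> real"
    and g G :: "real \<Rightarrow> real" and k :: nat and D0 :: real
  assumes "prob_space M"
    and g_nonneg: "\<And>x. 0 \<le> g x"
    and g_meas: "g \<in> borel_measurable borel"
    and g_supp: "\<And>x. x \<notin> {0..1} \<Longrightarrow> g x = 0"
    and G_def: "\<And>z. G z = (\<integral>x\<in>{0..z}. g x \<partial>lborel)"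
    and regular: "one_regular (density lborel (\<lambda>x. ennreal (g x)))"
    and indep: "prob_space.indep_vars M (\<lambda>_. borel) \<mu> {1..k}"
    and distr: "\<And>j. j \<in> {1..k} \<Longrightarrow> distributed M lborel (\<mu> j) (\<lambda>x. ennreal (g x))"
  shows "(\<forall>i\<in>{2..k}. distributed M lborel (\<lambda>\<omega>. gap_stat k (\<lambda>j. \<mu> j \<omega>) i)
            (\<lambda>u. indicator {0..1} u * ennreal (real k * (real k - 1) * real ((k - 2) choose (i - 2)))
               * (\<integral>\<^sup>+ z\<in>{0..1 - u}. ennreal ((G (u + z) - G z) ^ (i - 2) * g (u + z) * g z * G z ^ (k - i)) \<partial>lborel)))
       \<and> ((\<forall>x\<in>{0..1}. g x \<le> D0) \<longrightarrow>
          (\<forall>i\<in>{3..k}. (\<integral>\<^sup>+ \<omega>. ennreal (1 / gap_stat k (\<lambda>j. \<mu> j \<omega>) i) \<partial>M)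
                         \<le> ennreal (D0 * real k / (real i - 2))))"
proof (cases "k = 0")
  case True
  then show ?thesis
    by simp
next
  case False
  interpret M: prob_space M
    by fact
  have prob_\<Gamma>: "prob_space (density lborel (\<lambda>x. ennreal (g x)))"
    using M.prob_space_distr[of "\<mu> 1" lborel] distr[of 1] False by (simp add: distributed_def)
  interpret iid_unit_interval_sample g G M \<mu> k
    by (intro iid_unit_interval_sample.intro unit_interval_density.intro
        iid_unit_interval_sample_axioms.intro M.prob_space_axioms)
      (fact g_nonneg g_meas g_supp G_def prob_\<Gamma> indep distr)+
  show ?thesis
    by (intro conjI impI ballI distributed_gap_stat nn_integral_inverse_gap_stat_le) auto
qed

end
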